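(* Let $\mathcal{G}\subset\mathcal{S}$ with harmonic analogue $\mathcal{G}_H^0$, and let $\mathcal{O}\subset\mathcal{A}$ be such that $\varphi*F\in\mathcal{G}$ for all $F\in\mathcal{G}$ and $\varphi\in\mathcal{O}$. Then $\varphi\,\tilde{*}\,f\in\mathcal{G}_H^0$ for all $\varphi\in\mathcal{O}$ and $f\in\mathcal{G}_H^0$.
   Context: $\mathbb{D}$ is the open unit disk. $\mathcal{A}$ is the class of analytic $f$ in $\mathbb{D}$ with $f(0)=0$, $f'(0)=1$, and $\mathcal{S}\subset\mathcal{A}$ the univalent ones. For $\mathcal{G}\subset\mathcal{S}$, its harmonic analogue $\mathcal{G}_H^0$ is the class of harmonic functions $f=h+\bar g$ ($h,g$ analytic in $\mathbb{D}$) such that $h+\epsilon g\in\mathcal{G}$ for every $|\epsilon|=1$. For analytic $f(z)=\sum a_nz^n$, $F(z)=\sum A_nz^n$, $(f*F)(z)=\sum a_nA_nz^n$. For harmonic $f=h+\bar g$ and analytic $\varphi$, $f\,\tilde{*}\,\varphi=\varphi\,\tilde{*}\,f=h*\varphi+\overline{g*\varphi}$. *)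

theory Defs
  imports "HOL-Analysis.Analysis"
begin

text \<open>Functions on the open unit disk are represented by total functions
  complex \<Rightarrow> complex; only their behaviour on the disk is constrained.\<close>

definition classA :: "(complex \<Rightarrow> complex) set" where
  "classA = {f. f holomorphic_on ball 0 1 \<and> f 0 = 0 \<and> deriv f 0 = 1}"

definition classS :: "(complex \<Rightarrow> complex) set" where
  "classS = {f \<in> classA. inj_on f (ball 0 1)}"

definition taylor_coeff :: "(complex \<Rightarrow> complex) \<Rightarrow> nat \<Rightarrow> complex" where
  "taylor_coeff f n = (deriv ^^ n) f 0 / of_nat (fact n)"

definition hadamard :: "(complex \<Rightarrow> complex) \<Rightarrow> (complex \<Rightarrow> complex) \<Rightarrow> complex \<Rightarrow> complex" where
  "hadamard f F z = (if z \<in> ball 0 1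
      then (\<Sum>n. taylor_coeff f n * taylor_coeff F n * z ^ n) else 0)"

text \<open>A harmonic function f = h + conj g is represented by the pair (h, g).
  Harmonic analogue of a class G.\<close>
definition harmonic_analogue ::
  "(complex \<Rightarrow> complex) set \<Rightarrow> ((complex \<Rightarrow> complex) \<times> (complex \<Rightarrow> complex)) set" where
  "harmonic_analogue G = {(h, g). h holomorphic_on ball 0 1 \<and> g holomorphic_on ball 0 1 \<and>
      (\<forall>\<epsilon>. cmod \<epsilon> = 1 \<longrightarrow> (\<lambda>z. h z + \<epsilon> * g z) \<in> G)}"

definition harm_fun :: "(complex \<Rightarrow> complex) \<times> (complex \<Rightarrow> complex) \<Rightarrow> complex \<Rightarrow> complex" where
  "harm_fun f z = fst f z + cnj (snd f z)"

definition harm_conv ::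
  "(complex \<Rightarrow> complex) \<Rightarrow> (complex \<Rightarrow> complex) \<times> (complex \<Rightarrow> complex)
   \<Rightarrow> (complex \<Rightarrow> complex) \<times> (complex \<Rightarrow> complex)" where
  "harm_conv \<phi> f = (hadamard (fst f) \<phi>, hadamard (snd f) \<phi>)"

end

theory Submission
  imports Defs "HOL-Complex_Analysis.Complex_Analysis"
begin

text \<open>The convolution is linear in each factor, so convolving \<open>h + \<epsilon> g\<close> with \<open>\<phi>\<close> gives
  \<open>h * \<phi> + \<epsilon> (g * \<phi>)\<close>, which lies in \<open>G\<close> by hypothesis. The only analytic work is
  the convergence of the Hadamard series on the disk, which licenses splitting the sum.
  Holomorphy of \<open>h * \<phi>\<close> and \<open>g * \<phi>\<close> is recovered from the two members \<open>\<epsilon> = \<plusminus>1\<close>.\<close>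

lemma eventually_norm_taylor_coeff_mult_power_less_1:
  assumes h: "h holomorphic_on ball 0 1" and t: "0 \<le> t" "t < 1"
  shows "eventually (\<lambda>n. norm (taylor_coeff h n) * t ^ n < 1) sequentially"
proof -
  have "(\<lambda>n. (deriv ^^ n) h 0 / fact n * (complex_of_real t - 0) ^ n) sums h (complex_of_real t)"
    by (rule holomorphic_power_series[OF h]) (use t in auto)
  hence "(\<lambda>n. norm (taylor_coeff h n * complex_of_real t ^ n)) \<longlonglongrightarrow> 0"
    unfolding taylor_coeff_def by (simp add: sums_iff summable_LIMSEQ_zero tendsto_norm_zero)
  from order_tendstoD(2)[OF this, of 1] show ?thesis
    using t by (simp add: norm_mult norm_power)
qed

lemma summable_hadamard_series:
  assumes h: "h holomorphic_on ball 0 1" and p: "p holomorphic_on ball 0 1"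
    and z: "z \<in> ball 0 1"
  shows "summable (\<lambda>n. taylor_coeff h n * taylor_coeff p n * z ^ n)"
proof -
  define r where "r = norm z"
  have r: "0 \<le> r" "r < 1" using z by (auto simp: r_def)
  text \<open>Both coefficient sequences are eventually below \<open>t\<^sup>-\<^sup>n\<close> with \<open>r < t\<^sup>2 < 1\<close>,
    so the series is dominated by the geometric series in \<open>r / t\<^sup>2\<close>.\<close>
  define t where "t = sqrt ((1 + r) / 2)"
  have t: "0 \<le> t" "t < 1" using r by (auto simp: t_def real_sqrt_lt_1_iff)
  have tpos: "t > 0" using r by (simp add: t_def)
  have "t\<^sup>2 = (1 + r) / 2" using r by (simp add: t_def)
  hence q: "r / t\<^sup>2 < 1" "0 \<le> r / t\<^sup>2" using r by (auto simp: divide_less_eq)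
  have "eventually (\<lambda>n. norm (taylor_coeff h n * taylor_coeff p n * z ^ n) \<le> (r / t\<^sup>2) ^ n) sequentially"
    using eventually_norm_taylor_coeff_mult_power_less_1[OF h t]
      eventually_norm_taylor_coeff_mult_power_less_1[OF p t]
  proof eventually_elim
    case (elim n)
    have "norm (taylor_coeff h n * taylor_coeff p n * z ^ n)
        = (norm (taylor_coeff h n) * t ^ n) * (norm (taylor_coeff p n) * t ^ n) * (r / t\<^sup>2) ^ n"
      using tpos by (simp add: norm_mult norm_power r_def power_divide field_simps power_mult_distrib
          mult_2_right power_add flip: power_mult)
    also have "\<dots> \<le> 1 * 1 * (r / t\<^sup>2) ^ n"
      using elim q t by (intro mult_right_mono mult_mono) auto
    finally show ?case by simp
  qed
  then show ?thesis
    by (rule summable_comparison_test_ev) (use q in \<open>simp add: summable_geometric\<close>)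
qed

lemma taylor_coeff_add_cmult:
  assumes "h holomorphic_on ball 0 1" and "g holomorphic_on ball 0 1"
  shows "taylor_coeff (\<lambda>z. h z + e * g z) n = taylor_coeff h n + e * taylor_coeff g n"
proof -
  have "(\<lambda>z. e * g z) holomorphic_on ball 0 1" using assms(2) by (intro holomorphic_intros)
  then show ?thesis
    unfolding taylor_coeff_def
    using higher_deriv_add[OF assms(1), of _ 0 n] higher_deriv_cmult[OF assms(2), of 0 n e]
    by (simp add: add_divide_distrib)
qed

lemma hadamard_commute: "hadamard f F = hadamard F f"
  by (simp add: hadamard_def mult.commute mult.left_commute fun_eq_iff)

lemma hadamard_add_cmult_left:
  assumes h: "h holomorphic_on ball 0 1" and g: "g holomorphic_on ball 0 1"
    and p: "p holomorphic_on ball 0 1"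
  shows "hadamard (\<lambda>z. h z + e * g z) p = (\<lambda>z. hadamard h p z + e * hadamard g p z)"
proof
  fix z :: complex
  show "hadamard (\<lambda>z. h z + e * g z) p z = hadamard h p z + e * hadamard g p z"
  proof (cases "z \<in> ball 0 1")
    case False
    then show ?thesis by (simp add: hadamard_def)
  next
    case True
    note sh = summable_hadamard_series[OF h p True]
    note sg = summable_hadamard_series[OF g p True]
    have "(\<Sum>n. taylor_coeff (\<lambda>z. h z + e * g z) n * taylor_coeff p n * z ^ n)
        = (\<Sum>n. taylor_coeff h n * taylor_coeff p n * z ^ n + e * (taylor_coeff g n * taylor_coeff p n * z ^ n))"
      by (simp add: taylor_coeff_add_cmult[OF h g] algebra_simps)
    also have "\<dots> = (\<Sum>n. taylor_coeff h n * taylor_coeff p n * z ^ n)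
                    + e * (\<Sum>n. taylor_coeff g n * taylor_coeff p n * z ^ n)"
      using suminf_add[OF sh summable_mult[OF sg, of e]] suminf_mult[OF sg, of e] by simp
    finally show ?thesis using True by (simp add: hadamard_def)
  qed
qed

lemma holomorphic_on_from_unimodular_combinations:
  assumes "\<And>e. cmod e = 1 \<Longrightarrow> (\<lambda>z. u z + e * v z) holomorphic_on S"
  shows "u holomorphic_on S" and "v holomorphic_on S"
proof -
  have plus: "(\<lambda>z. u z + v z) holomorphic_on S" using assms[of 1] by simp
  have minus: "(\<lambda>z. u z - v z) holomorphic_on S" using assms[of "-1"] by simp
  have "(\<lambda>z. ((u z + v z) + (u z - v z)) / 2) holomorphic_on S"
    using holomorphic_on_divide[OF holomorphic_on_add[OF plus minus] holomorphic_on_const, of 2] by simp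
  then show "u holomorphic_on S" by simp
  have "(\<lambda>z. ((u z + v z) - (u z - v z)) / 2) holomorphic_on S"
    using holomorphic_on_divide[OF holomorphic_on_diff[OF plus minus] holomorphic_on_const, of 2] by simp
  then show "v holomorphic_on S" by simp
qed

theorem theorem2p11:
  fixes G Ocl :: "(complex \<Rightarrow> complex) set"
  assumes "G \<subseteq> classS"
    and "Ocl \<subseteq> classA"
    and "\<And>\<phi> F. \<phi> \<in> Ocl \<Longrightarrow> F \<in> G \<Longrightarrow> hadamard \<phi> F \<in> G"
  shows "\<forall>\<phi>\<in>Ocl. \<forall>f\<in>harmonic_analogue G. harm_conv \<phi> f \<in> harmonic_analogue G"
proof (intro ballI)
  fix p f assume pO: "p \<in> Ocl" and f: "f \<in> harmonic_analogue G"
  obtain h g where fe: "f = (h, g)" by (cases f)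
  have h: "h holomorphic_on ball 0 1" and g: "g holomorphic_on ball 0 1"
    and hg: "\<And>e. cmod e = 1 \<Longrightarrow> (\<lambda>z. h z + e * g z) \<in> G"
    using f by (auto simp: harmonic_analogue_def fe)
  have p: "p holomorphic_on ball 0 1" using pO assms(2) by (auto simp: classA_def)
  have conv_in_G: "(\<lambda>z. hadamard h p z + e * hadamard g p z) \<in> G" if "cmod e = 1" for e
    using assms(3)[OF pO hg[OF that]] hadamard_add_cmult_left[OF h g p, of e]
    by (simp add: hadamard_commute)
  then have "(\<lambda>z. hadamard h p z + e * hadamard g p z) holomorphic_on ball 0 1"
    if "cmod e = 1" for e
    using that assms(1) by (auto simp: classS_def classA_def)
  note conv_holo = holomorphic_on_from_unimodular_combinations[OF this]
  show "harm_conv p f \<in> harmonic_analogue G"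
    using conv_holo conv_in_G by (simp add: harm_conv_def fe harmonic_analogue_def)
qed

end
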